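(* For every integer $n\ge 2$, \[ x\sum_{k=1}^{n}\binom{n}{k}\,{}_{H}w_{k}(x)=(x+1)\,{}_{H}w_{n}(x)-(x+1)\,w_{n-1}(x). \]
   Context: $\genfrac{\{}{\}}{0pt}{}{n}{k}$ denotes the Stirling numbers of the second kind. The geometric polynomials are $w_n(x)=\sum_{k=0}^{n}\genfrac{\{}{\}}{0pt}{}{n}{k}k!\,x^k$. With $H_k=\sum_{i=1}^k 1/i$, the harmonic geometric polynomials are ${}_{H}w_n(x)=\sum_{k=1}^{n}\genfrac{\{}{\}}{0pt}{}{n}{k}k!\,H_k\,x^k$. *)

theory Defs
  imports "HOL-Analysis.Analysis" "HOL-Combinatorics.Stirling"
begin

definition geom_poly :: "nat \<Rightarrow> real \<Rightarrow> real" where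
  "geom_poly n x = (\<Sum>k=0..n. real (Stirling n k) * fact k * x ^ k)"

definition harm_geom_poly :: "nat \<Rightarrow> real \<Rightarrow> real" where
  "harm_geom_poly n x = (\<Sum>k=1..n. real (Stirling n k) * fact k * harm k * x ^ k)"

end

theory Submission
  imports Defs
begin

(* Summing the Stirling recurrence against binomial coefficients gives
   S(n+1, j+1) = sum_k C(n,k) S(k,j), so sum_k C(n,k) Hw_k(x) = sum_j S(n+1,j+1) j! H_j x^j.
   One more step of the recurrence splits this into Hw_n(x) plus a sum which, multiplied by x
   and rewritten with H_(j+1) = H_j + 1/(j+1), equals Hw_n(x) - sum_k S(n,k) (k-1)! x^k;
   the recurrence again identifies the last sum with (x+1) w_(n-1)(x) once n >= 2. *)

lemma sum_binomial_Suc: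
  fixes f :: "nat \<Rightarrow> 'a::comm_semiring_1"
  shows "(\<Sum>k\<le>Suc n. of_nat (Suc n choose k) * f k)
       = (\<Sum>k\<le>n. of_nat (n choose k) * (f k + f (Suc k)))"
proof -
  have "(\<Sum>k\<le>Suc n. of_nat (Suc n choose k) * f k)
      = (\<Sum>k\<le>n. of_nat (n choose k) * f (Suc k)) + (f 0 + (\<Sum>k\<le>n. of_nat (n choose Suc k) * f (Suc k)))"
    unfolding sum.atMost_Suc_shift by (simp add: sum.distrib algebra_simps)
  also have "f 0 + (\<Sum>k\<le>n. of_nat (n choose Suc k) * f (Suc k)) = (\<Sum>k\<le>Suc n. of_nat (n choose k) * f k)"
    by (subst sum.atMost_Suc_shift) simp
  also have "\<dots> = (\<Sum>k\<le>n. of_nat (n choose k) * f k)"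
    by (simp add: binomial_eq_0)
  finally show ?thesis
    by (simp add: sum.distrib algebra_simps)
qed

lemma Stirling_Suc_Suc_binomial_sum:
  "Stirling (Suc n) (Suc j) = (\<Sum>k\<le>n. (n choose k) * Stirling k j)"
proof (induction n arbitrary: j)
  case 0
  then show ?case by (cases j) auto
next
  case (Suc n)
  have "(\<Sum>k\<le>Suc n. (Suc n choose k) * Stirling k j)
      = (\<Sum>k\<le>n. (n choose k) * Stirling k j) + (\<Sum>k\<le>n. (n choose k) * Stirling (Suc k) j)"
    using sum_binomial_Suc[of n "\<lambda>k. Stirling k j"] by (simp add: distrib_left sum.distrib)
  also have "(\<Sum>k\<le>n. (n choose k) * Stirling (Suc k) j) = j * Stirling (Suc n) (Suc j) + Stirling (Suc n) j"
  proof (cases j)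
    case (Suc i)
    then show ?thesis
      using Suc.IH[of i] Suc.IH[of "Suc i"]
      by (simp add: sum.distrib sum_distrib_left algebra_simps del: Stirling.simps(3))
  qed simp
  finally show ?case
    using Suc.IH by simp
qed

lemma sum_Stirling_atMost_extend:
  fixes c :: "nat \<Rightarrow> 'a::comm_semiring_1"
  assumes "k \<le> m"
  shows "(\<Sum>j\<le>m. of_nat (Stirling k j) * c j) = (\<Sum>j\<le>k. of_nat (Stirling k j) * c j)"
  using assms by (intro sum.mono_neutral_right) auto

lemma sum_binomial_Stirling_sums:
  fixes c :: "nat \<Rightarrow> 'a::comm_semiring_1"
  shows "(\<Sum>k\<le>n. of_nat (n choose k) * (\<Sum>j\<le>k. of_nat (Stirling k j) * c j))
       = (\<Sum>j\<le>n. of_nat (Stirling (Suc n) (Suc j)) * c j)"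
proof -
  have "(\<Sum>k\<le>n. of_nat (n choose k) * (\<Sum>j\<le>k. of_nat (Stirling k j) * c j))
      = (\<Sum>k\<le>n. of_nat (n choose k) * (\<Sum>j\<le>n. of_nat (Stirling k j) * c j))"
    using sum_Stirling_atMost_extend[of _ n c] by (intro sum.cong refl) simp
  also have "\<dots> = (\<Sum>j\<le>n. \<Sum>k\<le>n. of_nat (n choose k) * of_nat (Stirling k j) * c j)"
    unfolding sum_distrib_left by (subst sum.swap) (simp only: mult.assoc)
  also have "\<dots> = (\<Sum>j\<le>n. of_nat (\<Sum>k\<le>n. (n choose k) * Stirling k j) * c j)"
    by (simp only: of_nat_sum of_nat_mult sum_distrib_right)
  also have "\<dots> = (\<Sum>j\<le>n. of_nat (Stirling (Suc n) (Suc j)) * c j)"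
    by (simp only: Stirling_Suc_Suc_binomial_sum)
  finally show ?thesis .
qed

lemma sum_Stirling_Suc_Suc:
  fixes c :: "nat \<Rightarrow> 'a::comm_semiring_1"
  shows "(\<Sum>j\<le>n. of_nat (Stirling (Suc n) (Suc j)) * c j)
       = (\<Sum>j\<le>n. of_nat (Stirling n j) * c j) + (\<Sum>j<n. of_nat (Suc j * Stirling n (Suc j)) * c j)"
proof -
  have "(\<Sum>j\<le>n. of_nat (Suc j * Stirling n (Suc j)) * c j) = (\<Sum>j<n. of_nat (Suc j * Stirling n (Suc j)) * c j)"
    by (simp flip: lessThan_Suc_atMost)
  then show ?thesis
    by (simp add: sum.distrib distrib_right add.commute del: of_nat_mult)
qed

lemma harm_geom_poly_altdef:
  "harm_geom_poly n x = (\<Sum>j\<le>n. real (Stirling n j) * (fact j * harm j * x ^ j))"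
  unfolding harm_geom_poly_def atMost_atLeast0 by (simp add: sum.atLeast_Suc_atMost harm_expand mult.assoc)

lemma geom_poly_altdef:
  "geom_poly n x = (\<Sum>j\<le>n. real (Stirling n j) * fact j * x ^ j)"
  by (simp add: geom_poly_def atMost_atLeast0)

lemma harm_geom_poly_split_harm_Suc:
  "harm_geom_poly n x
     = (\<Sum>j<n. real (Stirling n (Suc j)) * fact (Suc j) * harm j * x ^ Suc j)
     + (\<Sum>j<n. real (Stirling n (Suc j)) * fact j * x ^ Suc j)"
proof -
  have harm_Suc_fact: "fact (Suc j) * harm (Suc j) = fact (Suc j) * harm j + (fact j :: real)" for j
    by (simp add: harm_Suc distrib_left)
  have "harm_geom_poly n x = (\<Sum>j<n. real (Stirling n (Suc j)) * fact (Suc j) * harm (Suc j) * x ^ Suc j)"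
    by (simp add: harm_geom_poly_def sum.atLeast1_atMost_eq)
  also have "\<dots> = (\<Sum>j<n. real (Stirling n (Suc j)) * (fact (Suc j) * harm j + fact j) * x ^ Suc j)"
    by (simp only: mult.assoc harm_Suc_fact)
  finally show ?thesis
    by (simp add: sum.distrib[symmetric] algebra_simps)
qed

lemma sum_Stirling_fact_pred_eq_geom_poly:
  fixes x :: real
  assumes "n \<ge> 2"
  shows "(\<Sum>j<n. real (Stirling n (Suc j)) * fact j * x ^ Suc j) = (x + 1) * geom_poly (n - 1) x"
proof -
  obtain m where n: "n = Suc m" and "m \<ge> 1"
    using assms by (cases n) auto
  define W where "W j = real (Stirling m j) * fact j * x ^ j" for j
  have "W 0 = 0"
    using \<open>m \<ge> 1\<close> by (cases m) (simp_all add: W_def)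
  have W_geom: "(\<Sum>j\<le>m. W j) = geom_poly m x"
    by (simp add: W_def geom_poly_altdef)
  have "(\<Sum>j<n. W (Suc j)) = (\<Sum>j\<le>Suc m. W j)"
    unfolding n lessThan_Suc_atMost sum.atMost_Suc_shift by (simp add: \<open>W 0 = 0\<close>)
  also have "\<dots> = (\<Sum>j\<le>m. W j)"
    by (simp add: W_def)
  also have "\<dots> = geom_poly m x"
    by (fact W_geom)
  finally have shifted: "(\<Sum>j<n. W (Suc j)) = geom_poly m x" .
  have "real (Stirling n (Suc j)) * fact j * x ^ Suc j = W (Suc j) + x * W j" for j
    by (simp add: n W_def algebra_simps)
  then have "(\<Sum>j<n. real (Stirling n (Suc j)) * fact j * x ^ Suc j) = (\<Sum>j<n. W (Suc j)) + x * (\<Sum>j\<le>m. W j)"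
    by (simp add: n lessThan_Suc_atMost sum.distrib sum_distrib_left)
  also have "\<dots> = (x + 1) * geom_poly (n - 1) x"
    unfolding shifted W_geom by (simp add: n algebra_simps)
  finally show ?thesis .
qed

lemma binomial_sum_harm_geom_poly:
  "(\<Sum>k=1..n. real (n choose k) * harm_geom_poly k x)
     = harm_geom_poly n x + (\<Sum>j<n. real (Stirling n (Suc j)) * fact (Suc j) * harm j * x ^ j)"
proof -
  define c where "c j = fact j * harm j * x ^ j" for j
  have "harm_geom_poly 0 x = 0"
    by (simp add: harm_geom_poly_def)
  then have "(\<Sum>k=1..n. real (n choose k) * harm_geom_poly k x)
      = (\<Sum>k\<le>n. real (n choose k) * (\<Sum>j\<le>k. real (Stirling k j) * c j))"
    by (simp add: atMost_atLeast0 sum.atLeast_Suc_atMost harm_geom_poly_altdef c_def)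
  also have "\<dots> = (\<Sum>j\<le>n. real (Stirling n j) * c j) + (\<Sum>j<n. real (Suc j * Stirling n (Suc j)) * c j)"
    by (simp only: sum_binomial_Stirling_sums sum_Stirling_Suc_Suc)
  also have "\<dots> = harm_geom_poly n x + (\<Sum>j<n. real (Stirling n (Suc j)) * fact (Suc j) * harm j * x ^ j)"
    by (simp add: harm_geom_poly_altdef c_def algebra_simps)
  finally show ?thesis .
qed

theorem proposition1:
  fixes n :: nat and x :: real
  assumes "n \<ge> 2"
  shows "x * (\<Sum>k=1..n. real (n choose k) * harm_geom_poly k x)
         = (x + 1) * harm_geom_poly n x - (x + 1) * geom_poly (n - 1) x"
proof -
  have "x * (\<Sum>k=1..n. real (n choose k) * harm_geom_poly k x)
      = x * harm_geom_poly n x + (\<Sum>j<n. real (Stirling n (Suc j)) * fact (Suc j) * harm j * x ^ Suc j)"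
    unfolding binomial_sum_harm_geom_poly by (simp add: distrib_left sum_distrib_left mult_ac)
  also have "\<dots> = x * harm_geom_poly n x + harm_geom_poly n x
      - (\<Sum>j<n. real (Stirling n (Suc j)) * fact j * x ^ Suc j)"
    using harm_geom_poly_split_harm_Suc[of n x] by simp
  also have "\<dots> = (x + 1) * harm_geom_poly n x - (x + 1) * geom_poly (n - 1) x"
    unfolding sum_Stirling_fact_pred_eq_geom_poly[OF assms] by (simp add: algebra_simps)
  finally show ?thesis .
qed

end
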